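(* For a positive integer $k>1$ let $G_k=P_{(2k+2)^2} \times P_{(2k+1)^2}$. Then $\dim_{k,f}(G_k)=\Theta(k^2)$ as $k\to\infty$; consequently both $\frac{\dim_{1,f}(G_k)}{\dim_{k,f}(G_k)}$ and $\frac{\dim_{k,f}(G_k)}{\dim_f(G_k)}$ can be arbitrarily large (they are unbounded as $k\to\infty$).
   Context: $P_n$ is the path on $n$ vertices and $\times$ denotes the Cartesian product (grid graph). $d(x,y)$ is the distance in $G$. For a function $g$ on $V(G)$ and $U\subseteq V(G)$, $g(U)=\sum_{s\in U}g(s)$. $R\{x,y\}=\{z: d(x,z)\ne d(y,z)\}$; $g:V(G)\to[0,1]$ is a resolving function if $g(R\{x,y\})\ge1$ for all distinct $x,y$, and $\dim_f(G)$ is the minimum of $g(V(G))$ over resolving functions. For a positive integer $k$, $d_k(x,y)=\min\{d(x,y),k+1\}$, $R_k\{x,y\}=\{z: d_k(x,z)\neq d_k(y,z)\}$; $h:V(G)\to[0,1]$ is a $k$-truncated resolving function if $h(R_k\{x,y\})\ge 1$ for all distinct $x,y$, and $\dim_{k,f}(G)$ is the minimum of $h(V(G))$ over such $h$. $f=\Theta(g)$ means $c_1|g|\le|f|\le c_2|g|$ for some positive constants and all sufficiently large arguments. *)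

theory Defs
  imports Complex_Main "HOL-Library.Landau_Symbols"
begin

text \<open>A graph is given by a vertex set V and a symmetric adjacency relation E.\<close>

fun is_walk :: "('a \<Rightarrow> 'a \<Rightarrow> bool) \<Rightarrow> 'a list \<Rightarrow> bool" where
  "is_walk E [] = True"
| "is_walk E [x] = True"
| "is_walk E (x # y # xs) = (E x y \<and> is_walk E (y # xs))"

definition gdist :: "'a set \<Rightarrow> ('a \<Rightarrow> 'a \<Rightarrow> bool) \<Rightarrow> 'a \<Rightarrow> 'a \<Rightarrow> nat" where
  "gdist V E x y = (LEAST n. \<exists>xs. length xs = Suc n \<and> hd xs = x \<and> last xs = y
                                  \<and> set xs \<subseteq> V \<and> is_walk E xs)"

text \<open>The grid graph P_m \<times> P_n (Cartesian product of paths), vertices (i,j), i<m, j<n.\<close>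
definition grid_V :: "nat \<Rightarrow> nat \<Rightarrow> (nat \<times> nat) set" where
  "grid_V m n = {0..<m} \<times> {0..<n}"

definition grid_E :: "nat \<times> nat \<Rightarrow> nat \<times> nat \<Rightarrow> bool" where
  "grid_E p q = ((fst p = fst q \<and> (snd p = Suc (snd q) \<or> snd q = Suc (snd p)))
               \<or> (snd p = snd q \<and> (fst p = Suc (fst q) \<or> fst q = Suc (fst p))))"

definition resolv_set :: "'a set \<Rightarrow> ('a \<Rightarrow> 'a \<Rightarrow> nat) \<Rightarrow> 'a \<Rightarrow> 'a \<Rightarrow> 'a set" where
  "resolv_set V d x y = {z \<in> V. d x z \<noteq> d y z}"

definition resolving_fun :: "'a set \<Rightarrow> ('a \<Rightarrow> 'a \<Rightarrow> nat) \<Rightarrow> ('a \<Rightarrow> real) \<Rightarrow> bool" where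
  "resolving_fun V d g = ((\<forall>z\<in>V. 0 \<le> g z \<and> g z \<le> 1) \<and>
      (\<forall>x\<in>V. \<forall>y\<in>V. x \<noteq> y \<longrightarrow> sum g (resolv_set V d x y) \<ge> 1))"

definition frac_dim_wrt :: "'a set \<Rightarrow> ('a \<Rightarrow> 'a \<Rightarrow> nat) \<Rightarrow> real" where
  "frac_dim_wrt V d = Inf {sum g V | g. resolving_fun V d g}"

definition frac_dim :: "'a set \<Rightarrow> ('a \<Rightarrow> 'a \<Rightarrow> bool) \<Rightarrow> real" where
  "frac_dim V E = frac_dim_wrt V (gdist V E)"

definition trunc_dist :: "nat \<Rightarrow> 'a set \<Rightarrow> ('a \<Rightarrow> 'a \<Rightarrow> bool) \<Rightarrow> 'a \<Rightarrow> 'a \<Rightarrow> nat" where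
  "trunc_dist k V E x y = min (gdist V E x y) (k + 1)"

definition trunc_frac_dim :: "nat \<Rightarrow> 'a set \<Rightarrow> ('a \<Rightarrow> 'a \<Rightarrow> bool) \<Rightarrow> real" where
  "trunc_frac_dim k V E = frac_dim_wrt V (trunc_dist k V E)"

definition Gk_V :: "nat \<Rightarrow> (nat \<times> nat) set" where
  "Gk_V k = grid_V ((2*k+2)^2) ((2*k+1)^2)"

end

theory Submission
  imports Defs "HOL-Library.Indicator_Function" "HOL-Library.Disjoint_Sets"
begin

text \<open>
  In a grid the graph distance is the Manhattan distance.  With distances truncated at \<open>t\<close>, two
  adjacent vertices are resolved only by vertices within distance \<open>t\<close> of one of them, so pairs of
  adjacent vertices placed on a lattice of spacing \<open>2t + 3\<close> have pairwise disjoint resolving sets,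
  and every \<open>t\<close>-truncated resolving function has weight at least the number of such pairs.  For
  \<open>G\<^sub>k\<close> this gives \<open>k\<^sup>2\<close> when \<open>t = k\<close> and order \<open>k\<^sup>4\<close> when \<open>t = 1\<close>.  Conversely, the
  lattice of spacing \<open>h = k div 2\<close>, closed off along the far borders, is a \<open>k\<close>-truncated resolving
  set with \<open>O(k\<^sup>2)\<close> points: each vertex lies within distance \<open>2h \<le> k\<close> of the corners of its
  lattice cell, and its distances to three of these corners determine it.  Finally the two
  corners \<open>(0, 0)\<close> and \<open>(M - 1, 0)\<close> resolve every grid, so \<open>dim\<^sub>f(G\<^sub>k) \<le> 2\<close>.
\<close>

section \<open>Resolving sets and fractional dimension\<close>

definition resolving_set :: "'a set \<Rightarrow> ('a \<Rightarrow> 'a \<Rightarrow> nat) \<Rightarrow> 'a set \<Rightarrow> bool" where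
  "resolving_set V d S \<longleftrightarrow>
     S \<subseteq> V \<and> (\<forall>x\<in>V. \<forall>y\<in>V. x \<noteq> y \<longrightarrow> (\<exists>s\<in>S. d x s \<noteq> d y s))"

lemma resolving_fun_indicator:
  assumes "finite V" and "resolving_set V d S"
  shows "resolving_fun V d (indicator S)"
  unfolding resolving_fun_def
proof (intro conjI ballI impI)
  fix x y assume "x \<in> V" "y \<in> V" "x \<noteq> y"
  then obtain s where s: "s \<in> S" "s \<in> resolv_set V d x y"
    using assms(2) unfolding resolving_set_def resolv_set_def by blast
  have "finite (resolv_set V d x y)"
    using assms(1) by (rule finite_subset[rotated]) (auto simp: resolv_set_def)
  then have "(indicator S s :: real) \<le> sum (indicator S) (resolv_set V d x y)"
    using s(2) by (intro member_le_sum) auto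
  then show "1 \<le> (sum (indicator S) (resolv_set V d x y) :: real)"
    using s(1) by simp
qed (auto simp: indicator_def)

lemma frac_dim_wrt_le:
  assumes "resolving_fun V d g"
  shows "frac_dim_wrt V d \<le> sum g V"
  unfolding frac_dim_wrt_def
proof (rule cInf_lower)
  show "sum g V \<in> {sum g V |g. resolving_fun V d g}"
    using assms by blast
  show "bdd_below {sum g V |g. resolving_fun V d g}"
    by (rule bdd_belowI[of _ 0]) (auto simp: resolving_fun_def intro: sum_nonneg)
qed

lemma frac_dim_wrt_le_card:
  assumes "finite V" and "resolving_set V d S"
  shows "frac_dim_wrt V d \<le> card S"
proof -
  have "S \<subseteq> V"
    using assms(2) by (simp add: resolving_set_def)
  have "frac_dim_wrt V d \<le> sum (indicator S) V"
    by (rule frac_dim_wrt_le[OF resolving_fun_indicator[OF assms]])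
  also have "\<dots> = card S"
    using assms(1) \<open>S \<subseteq> V\<close> by (simp add: indicator_def Int_absorb1)
  finally show ?thesis .
qed

lemma frac_dim_wrt_ge:
  assumes "resolving_fun V d g\<^sub>0" and "\<And>g. resolving_fun V d g \<Longrightarrow> c \<le> sum g V"
  shows "c \<le> frac_dim_wrt V d"
  unfolding frac_dim_wrt_def by (rule cInf_greatest) (use assms in auto)

lemma resolving_fun_sum_ge_card:
  fixes g :: "'a \<Rightarrow> real"
  assumes g: "resolving_fun V d g" and "finite V" and "finite I"
    and pairs: "\<And>i. i \<in> I \<Longrightarrow> x i \<in> V \<and> y i \<in> V \<and> x i \<noteq> y i"
    and disjoint: "disjoint_family_on (\<lambda>i. resolv_set V d (x i) (y i)) I"
  shows "real (card I) \<le> sum g V"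
proof -
  let ?R = "\<lambda>i. resolv_set V d (x i) (y i)"
  have "?R i \<subseteq> V" for i
    by (auto simp: resolv_set_def)
  then have finite_R: "finite (?R i)" for i
    using \<open>finite V\<close> by (rule finite_subset)
  have "real (card I) = (\<Sum>i\<in>I. 1)"
    by simp
  also have "\<dots> \<le> (\<Sum>i\<in>I. sum g (?R i))"
    using g pairs by (intro sum_mono) (auto simp: resolving_fun_def)
  also have "\<dots> = sum g (\<Union>i\<in>I. ?R i)"
    using \<open>finite I\<close> finite_R disjoint by (simp add: sum.UNION_disjoint_family)
  also have "\<dots> \<le> sum g V"
    using g \<open>finite V\<close> by (intro sum_mono2) (auto simp: resolving_fun_def resolv_set_def)
  finally show ?thesis .
qed

lemma frac_dim_wrt_ge_1:
  assumes "resolving_fun V d g\<^sub>0" and "finite V" and "x \<in> V" "y \<in> V" "x \<noteq> y"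
  shows "1 \<le> frac_dim_wrt V d"
proof (rule frac_dim_wrt_ge[OF assms(1)])
  fix g assume "resolving_fun V d g"
  from resolving_fun_sum_ge_card[OF this \<open>finite V\<close>, of "{()}" "\<lambda>_. x" "\<lambda>_. y"] assms(3-5)
  show "1 \<le> sum g V"
    by (simp add: disjoint_family_on_def)
qed

lemma resolv_set_trunc_dist_subset:
  "resolv_set V (trunc_dist k V E) x y \<subseteq> {z \<in> V. gdist V E x z \<le> k \<or> gdist V E y z \<le> k}"
  unfolding resolv_set_def trunc_dist_def by auto

section \<open>Distances in the grid\<close>

definition manhattan :: "nat \<times> nat \<Rightarrow> nat \<times> nat \<Rightarrow> nat" where
  "manhattan p q = (fst p - fst q) + (fst q - fst p) + (snd p - snd q) + (snd q - snd p)"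

lemma manhattan_le_walk_length:
  "is_walk grid_E xs \<Longrightarrow> xs \<noteq> [] \<Longrightarrow> manhattan (hd xs) (last xs) \<le> length xs - 1"
proof (induction xs rule: induct_list012)
  case (3 x y xs)
  then have "grid_E x y" and IH: "manhattan y (last (y # xs)) \<le> length xs"
    by auto
  then have "manhattan x (last (y # xs)) \<le> manhattan y (last (y # xs)) + 1"
    unfolding manhattan_def grid_E_def by auto
  with IH show ?case
    by simp
qed (auto simp: manhattan_def)

lemma grid_walk_of_length_manhattan:
  assumes "p \<in> grid_V M N" "q \<in> grid_V M N"
  shows "\<exists>xs. length xs = Suc (manhattan p q) \<and> hd xs = p \<and> last xs = q
            \<and> set xs \<subseteq> grid_V M N \<and> is_walk grid_E xs"
  using assms
proof (induction "manhattan p q" arbitrary: p)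
  case 0
  then have "p = q"
    unfolding manhattan_def by (simp add: prod_eq_iff)
  with 0 show ?case
    by (intro exI[of _ "[p]"]) auto
next
  case (Suc n)
  obtain i j u v where p: "p = (i, j)" and q: "q = (u, v)"
    by fastforce
  define p' where "p' = (if i < u then (Suc i, j) else if u < i then (i - 1, j)
                         else if j < v then (i, Suc j) else (i, j - 1))"
  have "grid_E p p'" and n: "n = manhattan p' q" and "p' \<in> grid_V M N"
    using Suc(2,3,4) unfolding p'_def p q grid_E_def manhattan_def grid_V_def by auto
  then obtain xs where xs: "length xs = Suc n" "hd xs = p'" "last xs = q"
      "set xs \<subseteq> grid_V M N" "is_walk grid_E xs"
    using Suc(1) Suc(4) by blast
  then have "xs = p' # tl xs"
    by (cases xs) auto
  with \<open>grid_E p p'\<close> xs(5) have "is_walk grid_E (p # xs)"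
    by (metis is_walk.simps(3))
  with xs \<open>xs = p' # tl xs\<close> Suc(2,3) show ?case
    by (intro exI[of _ "p # xs"]) (auto simp del: is_walk.simps)
qed

lemma gdist_grid_V:
  assumes "p \<in> grid_V M N" "q \<in> grid_V M N"
  shows "gdist (grid_V M N) grid_E p q = manhattan p q"
  unfolding gdist_def
proof (rule Least_equality)
  show "\<exists>xs. length xs = Suc (manhattan p q) \<and> hd xs = p \<and> last xs = q
            \<and> set xs \<subseteq> grid_V M N \<and> is_walk grid_E xs"
    using assms by (rule grid_walk_of_length_manhattan)
next
  fix n assume "\<exists>xs. length xs = Suc n \<and> hd xs = p \<and> last xs = q
                     \<and> set xs \<subseteq> grid_V M N \<and> is_walk grid_E xs"
  then obtain xs where "length xs = Suc n" "hd xs = p" "last xs = q" "is_walk grid_E xs"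
    by blast
  moreover have "xs \<noteq> []"
    using \<open>length xs = Suc n\<close> by auto
  ultimately show "manhattan p q \<le> n"
    using manhattan_le_walk_length[of xs] by auto
qed

lemma trunc_dist_grid_V:
  assumes "p \<in> grid_V M N" "q \<in> grid_V M N"
  shows "trunc_dist t (grid_V M N) grid_E p q = min (manhattan p q) (t + 1)"
  unfolding trunc_dist_def using gdist_grid_V[OF assms] by simp

lemma finite_grid_V: "finite (grid_V M N)"
  unfolding grid_V_def by simp

section \<open>Lower bound for the truncated dimension of a grid\<close>

lemma lattice_index_of_near_point:
  fixes t a b e :: nat
  defines "s \<equiv> 2 * t + 3"
  assumes "e \<le> 1" and "manhattan (a * s + e, b * s) z \<le> t"
  shows "(fst z + t) div s = a" and "(snd z + t) div s = b"
proof -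
  have "a * s \<le> fst z + t" "fst z + t < s * Suc a"
       "b * s \<le> snd z + t" "snd z + t < s * Suc b"
    using assms(2,3) unfolding s_def manhattan_def by (auto simp: algebra_simps)
  then show "(fst z + t) div s = a" and "(snd z + t) div s = b"
    by (simp_all add: div_nat_eqI mult.commute)
qed

lemma resolving_set_grid_V_self:
  "resolving_set (grid_V M N) (trunc_dist t (grid_V M N) grid_E) (grid_V M N)"
  unfolding resolving_set_def
proof (intro conjI ballI impI)
  fix x y assume "x \<in> grid_V M N" "y \<in> grid_V M N" "x \<noteq> y"
  moreover have "manhattan x x = 0" and "manhattan y x \<noteq> 0"
    using \<open>x \<noteq> y\<close> unfolding manhattan_def by (auto simp: prod_eq_iff)
  ultimately show "\<exists>s\<in>grid_V M N. trunc_dist t (grid_V M N) grid_E x s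
                                 \<noteq> trunc_dist t (grid_V M N) grid_E y s"
    by (intro bexI[of _ x]) (auto simp: trunc_dist_grid_V)
qed simp

lemma trunc_frac_dim_grid_ge:
  assumes "A * (2 * t + 3) \<le> M" and "B * (2 * t + 3) \<le> N"
  shows "real (A * B) \<le> trunc_frac_dim t (grid_V M N) grid_E"
proof -
  let ?V = "grid_V M N" and ?d = "trunc_dist t (grid_V M N) grid_E" and ?s = "2 * t + 3"
  let ?I = "{..<A} \<times> {..<B}"
  define x where "x = (\<lambda>(a, b). (a * ?s, b * ?s))"
  define y where "y = (\<lambda>(a, b). (a * ?s + 1, b * ?s))"
  have pairs: "x i \<in> ?V \<and> y i \<in> ?V \<and> x i \<noteq> y i" if "i \<in> ?I" for i
  proof -
    obtain a b where i: "i = (a, b)"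
      by fastforce
    with that have "Suc a \<le> A" "Suc b \<le> B"
      by auto
    then have "Suc a * ?s \<le> M" "Suc b * ?s \<le> N"
      using order_trans[OF mult_le_mono1 assms(1)] order_trans[OF mult_le_mono1 assms(2)]
      by blast+
    then show ?thesis
      unfolding x_def y_def i grid_V_def by simp
  qed
  have index: "i = ((fst z + t) div ?s, (snd z + t) div ?s)"
    if "i \<in> ?I" and "z \<in> resolv_set ?V ?d (x i) (y i)" for i z
  proof -
    obtain a b where i: "i = (a, b)"
      by fastforce
    have "z \<in> ?V"
      using that(2) by (simp add: resolv_set_def)
    have "gdist ?V grid_E (x i) z \<le> t \<or> gdist ?V grid_E (y i) z \<le> t"
      using subsetD[OF resolv_set_trunc_dist_subset that(2)] by simp
    then have "manhattan (x i) z \<le> t \<or> manhattan (y i) z \<le> t"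
      using gdist_grid_V[OF _ \<open>z \<in> ?V\<close>] pairs[OF that(1)] by simp
    then have "manhattan (a * ?s, b * ?s) z \<le> t \<or> manhattan (a * ?s + 1, b * ?s) z \<le> t"
      by (simp add: x_def y_def i)
    then obtain e :: nat where "e \<le> 1" and "manhattan (a * ?s + e, b * ?s) z \<le> t"
      by (metis add_0_right le_refl zero_le)
    from lattice_index_of_near_point[OF this] show ?thesis
      by (simp add: i)
  qed
  have disjoint: "disjoint_family_on (\<lambda>i. resolv_set ?V ?d (x i) (y i)) ?I"
    unfolding disjoint_family_on_def
  proof (intro ballI impI)
    fix i j assume "i \<in> ?I" "j \<in> ?I" "i \<noteq> j"
    show "resolv_set ?V ?d (x i) (y i) \<inter> resolv_set ?V ?d (x j) (y j) = {}"
    proof (rule equals0I)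
      fix z assume "z \<in> resolv_set ?V ?d (x i) (y i) \<inter> resolv_set ?V ?d (x j) (y j)"
      with index[OF \<open>i \<in> ?I\<close>] index[OF \<open>j \<in> ?I\<close>] \<open>i \<noteq> j\<close> show False
        by (metis IntD1 IntD2)
    qed
  qed
  show ?thesis
    unfolding trunc_frac_dim_def
  proof (rule frac_dim_wrt_ge)
    show "resolving_fun ?V ?d (indicator ?V)"
      by (rule resolving_fun_indicator[OF finite_grid_V resolving_set_grid_V_self])
    fix g assume "resolving_fun ?V ?d g"
    from resolving_fun_sum_ge_card[OF this finite_grid_V _ pairs disjoint]
    show "real (A * B) \<le> sum g ?V"
      by (simp add: card_cartesian_product)
  qed
qed

section \<open>Upper bound for the truncated dimension of a grid\<close>

definition spaced_points :: "nat \<Rightarrow> nat \<Rightarrow> nat set" where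
  "spaced_points M h = (\<lambda>i. min (i * h) (M - 1)) ` {..(M - 1) div h + 1}"

lemma spaced_points_less: "0 < M \<Longrightarrow> x \<in> spaced_points M h \<Longrightarrow> x < M"
  unfolding spaced_points_def by auto

lemma card_spaced_points_le: "card (spaced_points M h) \<le> (M - 1) div h + 2"
  unfolding spaced_points_def
  using card_image_le[of "{..(M - 1) div h + 1}" "\<lambda>i. min (i * h) (M - 1)"] by simp

lemma spaced_points_bracket:
  assumes "0 < h" "i < M"
  obtains a a' where "a \<in> spaced_points M h" "a' \<in> spaced_points M h"
    and "a \<le> i" "i \<le> a'" "a' \<le> a + h"
proof -
  let ?n = "i div h"
  have n_le: "?n \<le> (M - 1) div h"
    using assms(2) by (intro div_le_mono) simp
  have lower: "?n * h \<le> i"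
    by (simp add: div_times_less_eq_dividend)
  have upper: "i < ?n * h + h"
    using mod_less_divisor[OF assms(1), of i] div_mult_mod_eq[of i h] by linarith
  show ?thesis
  proof (rule that)
    have "min (?n * h) (M - 1) = ?n * h"
      using lower assms(2) by (intro min_absorb1) linarith
    with n_le show "?n * h \<in> spaced_points M h"
      unfolding spaced_points_def by (intro image_eqI[of _ _ ?n]) auto
    show "min (?n * h + h) (M - 1) \<in> spaced_points M h"
      using n_le unfolding spaced_points_def by (intro image_eqI[of _ _ "?n + 1"]) auto
  qed (use lower upper assms(2) in auto)
qed

lemma manhattan_cell_corner_le:
  assumes "a \<le> i" "i \<le> a'" "b \<le> j" "j \<le> b'" and "c \<in> {a, a'}" "e \<in> {b, b'}"
  shows "manhattan (i, j) (c, e) \<le> (a' - a) + (b' - b)"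
  using assms unfolding manhattan_def by auto

lemma manhattan_cell_corners_determine:
  assumes "a \<le> i" "i \<le> a'" "b \<le> j" "j \<le> b'"
    and ab: "manhattan (u, v) (a, b) = manhattan (i, j) (a, b)"
    and a'b: "manhattan (u, v) (a', b) = manhattan (i, j) (a', b)"
    and ab': "manhattan (u, v) (a, b') = manhattan (i, j) (a, b')"
  shows "(u, v) = (i, j)"
proof -
  \<comment> \<open>Only points of the cell \<open>[a, a'] \<times> [b, b']\<close> have distances to \<open>(a', b)\<close> and \<open>(a, b')\<close>
      summing to its half-perimeter.\<close>
  let ?du = "(u - a') + (a' - u) + (u - a) + (a - u)"
  let ?dv = "(v - b) + (b - v) + (v - b') + (b' - v)"
  have "manhattan (u, v) (a', b) + manhattan (u, v) (a, b') = (a' - a) + (b' - b)"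
    using assms(1-4) a'b ab' by (simp add: manhattan_def add.commute)
  then have "?du + ?dv = (a' - a) + (b' - b)"
    by (simp add: manhattan_def)
  moreover have "a' - a \<le> ?du" "b' - b \<le> ?dv"
    by arith+
  ultimately have du: "?du = a' - a" and dv: "?dv = b' - b"
    by linarith+
  have u: "a \<le> u \<and> u \<le> a'"
    using du assms(1,2) by arith
  have v: "b \<le> v \<and> v \<le> b'"
    using dv assms(3,4) by arith
  have "u + v = i + j"
    using ab u v assms(1-4) unfolding manhattan_def by simp arith
  moreover have "v + i = j + u"
    using a'b u v assms(1-4) unfolding manhattan_def by simp arith
  ultimately show ?thesis
    by simp
qed

lemma resolving_set_spaced_points:
  assumes "0 < M" "0 < N" "0 < h" "2 * h \<le> k"
  shows "resolving_set (grid_V M N) (trunc_dist k (grid_V M N) grid_E)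
           (spaced_points M h \<times> spaced_points N h)"
    (is "resolving_set ?V ?d ?S")
  unfolding resolving_set_def
proof (intro conjI ballI impI)
  show "?S \<subseteq> ?V"
    using spaced_points_less[OF assms(1)] spaced_points_less[OF assms(2)]
    unfolding grid_V_def by auto
  fix x y assume "x \<in> ?V" "y \<in> ?V" "x \<noteq> y"
  obtain i j u v where x: "x = (i, j)" and y: "y = (u, v)"
    by fastforce
  have "i < M" "j < N"
    using \<open>x \<in> ?V\<close> unfolding x grid_V_def by auto
  obtain a a' where a: "a \<in> spaced_points M h" "a' \<in> spaced_points M h"
      "a \<le> i" "i \<le> a'" "a' \<le> a + h"
    by (rule spaced_points_bracket[OF assms(3) \<open>i < M\<close>])
  obtain b b' where b: "b \<in> spaced_points N h" "b' \<in> spaced_points N h"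
      "b \<le> j" "j \<le> b'" "b' \<le> b + h"
    by (rule spaced_points_bracket[OF assms(3) \<open>j < N\<close>])
  show "\<exists>s\<in>?S. ?d x s \<noteq> ?d y s"
  proof (rule ccontr)
    assume "\<not> (\<exists>s\<in>?S. ?d x s \<noteq> ?d y s)"
    have "manhattan y (c, e) = manhattan x (c, e)" if "c \<in> {a, a'}" "e \<in> {b, b'}" for c e
    proof -
      have "(c, e) \<in> ?S"
        using that a b by auto
      with \<open>\<not> (\<exists>s\<in>?S. ?d x s \<noteq> ?d y s)\<close> have "?d x (c, e) = ?d y (c, e)"
        by blast
      moreover have "(c, e) \<in> ?V"
        using \<open>(c, e) \<in> ?S\<close> \<open>?S \<subseteq> ?V\<close> by blast
      ultimately have "min (manhattan x (c, e)) (k + 1) = min (manhattan y (c, e)) (k + 1)"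
        using \<open>x \<in> ?V\<close> \<open>y \<in> ?V\<close> by (simp add: trunc_dist_grid_V)
      moreover have "manhattan x (c, e) \<le> k"
        using manhattan_cell_corner_le[OF a(3,4) b(3,4) that] a(5) b(5) assms(4)
        unfolding x by linarith
      ultimately show ?thesis
        by linarith
    qed
    then have "y = x"
      unfolding x y by (intro manhattan_cell_corners_determine[OF a(3,4) b(3,4)]) auto
    with \<open>x \<noteq> y\<close> show False
      by simp
  qed
qed

lemma trunc_frac_dim_grid_le:
  assumes "0 < M" "0 < N" "0 < h" "2 * h \<le> k"
  shows "trunc_frac_dim k (grid_V M N) grid_E \<le> ((M - 1) div h + 2) * ((N - 1) div h + 2)"
proof -
  have "trunc_frac_dim k (grid_V M N) grid_E \<le> card (spaced_points M h \<times> spaced_points N h)"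
    unfolding trunc_frac_dim_def
    by (rule frac_dim_wrt_le_card[OF finite_grid_V resolving_set_spaced_points[OF assms]])
  also have "card (spaced_points M h \<times> spaced_points N h) \<le> ((M - 1) div h + 2) * ((N - 1) div h + 2)"
    unfolding card_cartesian_product by (intro mult_le_mono card_spaced_points_le)
  finally show ?thesis
    by simp
qed

section \<open>The fractional dimension of a grid\<close>

lemma resolving_set_grid_V_corners:
  assumes "0 < M" "0 < N"
  shows "resolving_set (grid_V M N) (gdist (grid_V M N) grid_E) {(0, 0), (M - 1, 0)}"
  unfolding resolving_set_def
proof (intro conjI ballI impI)
  show corners: "{(0, 0), (M - 1, 0)} \<subseteq> grid_V M N"
    using assms unfolding grid_V_def by auto
  fix x y assume x: "x \<in> grid_V M N" and y: "y \<in> grid_V M N" and "x \<noteq> y"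
  show "\<exists>s\<in>{(0, 0), (M - 1, 0)}.
          gdist (grid_V M N) grid_E x s \<noteq> gdist (grid_V M N) grid_E y s"
  proof (rule ccontr)
    assume "\<not> ?thesis"
    with x y corners have "manhattan x (0, 0) = manhattan y (0, 0)"
        and "manhattan x (M - 1, 0) = manhattan y (M - 1, 0)"
      by (auto simp: gdist_grid_V)
    moreover have "fst x < M" "fst y < M"
      using x y by (auto simp: grid_V_def)
    ultimately have "x = y"
      unfolding manhattan_def by (simp add: prod_eq_iff) arith
    with \<open>x \<noteq> y\<close> show False ..
  qed
qed

lemma frac_dim_grid_V_le_2:
  assumes "0 < M" "0 < N"
  shows "frac_dim (grid_V M N) grid_E \<le> 2"
proof -
  have "frac_dim (grid_V M N) grid_E \<le> card {(0::nat, 0::nat), (M - 1, 0)}"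
    unfolding frac_dim_def
    by (rule frac_dim_wrt_le_card[OF finite_grid_V resolving_set_grid_V_corners[OF assms]])
  also have "\<dots> \<le> 2"
    by (simp add: card_insert_le_m1)
  finally show ?thesis .
qed

lemma frac_dim_grid_V_ge_1:
  assumes "2 \<le> M" "0 < N"
  shows "1 \<le> frac_dim (grid_V M N) grid_E"
  unfolding frac_dim_def
proof (rule frac_dim_wrt_ge_1)
  show "resolving_fun (grid_V M N) (gdist (grid_V M N) grid_E) (indicator {(0, 0), (M - 1, 0)})"
    using assms by (intro resolving_fun_indicator finite_grid_V resolving_set_grid_V_corners) auto
  show "(0, 0) \<in> grid_V M N" "(1, 0) \<in> grid_V M N"
    using assms unfolding grid_V_def by auto
qed (auto simp: finite_grid_V)

section \<open>The graphs \<open>G\<^sub>k\<close>\<close>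

lemma Gk_trunc_frac_dim_ge: "real k ^ 2 \<le> trunc_frac_dim k (Gk_V k) grid_E"
proof -
  have "k * (2 * k + 3) \<le> (2 * k + 2)^2" "k * (2 * k + 3) \<le> (2 * k + 1)^2"
    by (simp_all add: power2_eq_square algebra_simps)
  from trunc_frac_dim_grid_ge[OF this] show ?thesis
    unfolding Gk_V_def by (simp add: power2_eq_square)
qed

lemma Gk_trunc_frac_dim_1_ge: "real m ^ 4 \<le> trunc_frac_dim 1 (Gk_V (2 * m)) grid_E"
proof -
  have "m^2 * (2 * 1 + 3) \<le> (2 * (2 * m) + 2)^2" "m^2 * (2 * 1 + 3) \<le> (2 * (2 * m) + 1)^2"
    by (simp_all add: power2_eq_square algebra_simps)
  from trunc_frac_dim_grid_ge[OF this] show ?thesis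
    unfolding Gk_V_def by (simp add: power4_eq_xxxx power2_eq_square)
qed

lemma Gk_spaced_points_count_le:
  fixes k P :: nat
  assumes "2 \<le> k" and "P \<le> (2 * k + 2)^2"
  shows "(P - 1) div (k div 2) + 2 \<le> 36 * k"
proof -
  let ?h = "k div 2" and ?q = "(P - 1) div (k div 2)"
  have "?q * k \<le> ?q * (4 * ?h)"
    using assms(1) by (intro mult_le_mono2) presburger
  also have "\<dots> = 4 * (?q * ?h)"
    by simp
  also have "\<dots> \<le> 4 * (P - 1)"
    using div_times_less_eq_dividend[of "P - 1" ?h] by linarith
  also have "\<dots> \<le> (16 * k + 38) * k"
  proof -
    have "P - 1 \<le> 4 * (k * k) + 8 * k + 3"
      using assms(2) by (simp add: power2_eq_square algebra_simps)
    with assms(1) show ?thesis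
      by (simp add: algebra_simps)
  qed
  finally have "?q \<le> 16 * k + 38"
    using assms(1) by simp
  with assms(1) show ?thesis
    by simp
qed

lemma Gk_trunc_frac_dim_le:
  assumes "2 \<le> k"
  shows "trunc_frac_dim k (Gk_V k) grid_E \<le> 1296 * real k ^ 2"
proof -
  let ?M = "(2 * k + 2)^2" and ?N = "(2 * k + 1)^2" and ?h = "k div 2"
  have "trunc_frac_dim k (Gk_V k) grid_E \<le> ((?M - 1) div ?h + 2) * ((?N - 1) div ?h + 2)"
    unfolding Gk_V_def using assms by (intro trunc_frac_dim_grid_le) auto
  also have "((?M - 1) div ?h + 2) * ((?N - 1) div ?h + 2) \<le> (36 * k) * (36 * k)"
    using assms by (intro mult_le_mono Gk_spaced_points_count_le) (auto simp: power2_eq_square)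
  finally show ?thesis
    by (simp add: power2_eq_square)
qed

lemma Gk_frac_dim_bounds: "1 \<le> frac_dim (Gk_V k) grid_E \<and> frac_dim (Gk_V k) grid_E \<le> 2"
  unfolding Gk_V_def
  by (intro conjI frac_dim_grid_V_ge_1 frac_dim_grid_V_le_2) (auto simp: power2_eq_square)

lemma Gk_trunc_frac_dim_Theta: "(\<lambda>k. trunc_frac_dim k (Gk_V k) grid_E) \<in> \<Theta>(\<lambda>k. real k ^ 2)"
proof (rule bigthetaI'[of 1 1296])
  show "\<forall>\<^sub>F k in at_top. 1 * norm (real k ^ 2) \<le> norm (trunc_frac_dim k (Gk_V k) grid_E) \<and>
                       norm (trunc_frac_dim k (Gk_V k) grid_E) \<le> 1296 * norm (real k ^ 2)"
    using Gk_trunc_frac_dim_ge Gk_trunc_frac_dim_le order_trans[OF zero_le_power2 Gk_trunc_frac_dim_ge]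
    by (intro eventually_at_top_linorderI[of 2]) simp
qed simp_all

lemma Gk_trunc_frac_dim_1_over_k_unbounded:
  "\<exists>k>1. trunc_frac_dim 1 (Gk_V k) grid_E / trunc_frac_dim k (Gk_V k) grid_E > B"
proof -
  obtain n :: nat where "B < n"
    using reals_Archimedean2 by blast
  \<comment> \<open>For \<open>k = 2m\<close> the bounds above give a ratio of at least \<open>m\<^sup>4 / (1296 (2m)\<^sup>2) = m\<^sup>2 / 5184\<close>.\<close>
  define m where "m = 5184 * (n + 1)"
  let ?D\<^sub>1 = "trunc_frac_dim 1 (Gk_V (2 * m)) grid_E"
  let ?D = "trunc_frac_dim (2 * m) (Gk_V (2 * m)) grid_E"
  have "2 \<le> 2 * m"
    unfolding m_def by simp
  have "0 < real (2 * m) ^ 2"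
    unfolding m_def by simp
  then have "0 < ?D"
    using Gk_trunc_frac_dim_ge by (rule less_le_trans)
  have m_eq: "real m = 5184 * (real n + 1)" and "m \<noteq> 0"
    unfolding m_def by simp_all
  then have "real n + 1 \<le> real m * (real n + 1)"
    by (simp add: mult_le_cancel_right1)
  with \<open>B < n\<close> have "B < real m * (real n + 1)"
    by linarith
  also have "\<dots> = real m ^ 2 / 5184"
    using m_eq by (simp add: power2_eq_square)
  also have "\<dots> = real m ^ 4 / (5184 * real m ^ 2)"
    using \<open>m \<noteq> 0\<close> by (simp add: power2_eq_square power4_eq_xxxx)
  also have "\<dots> \<le> ?D\<^sub>1 / ?D"
    using Gk_trunc_frac_dim_1_ge Gk_trunc_frac_dim_le[OF \<open>2 \<le> 2 * m\<close>] \<open>0 < ?D\<close>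
      order_trans[OF zero_le_power Gk_trunc_frac_dim_1_ge]
    by (intro frac_le) (auto simp: power2_eq_square)
  finally show ?thesis
    using \<open>2 \<le> 2 * m\<close> by (intro exI[of _ "2 * m"]) auto
qed

lemma Gk_trunc_frac_dim_over_frac_dim_unbounded:
  "\<exists>k>1. trunc_frac_dim k (Gk_V k) grid_E / frac_dim (Gk_V k) grid_E > B"
proof -
  obtain n :: nat where "B < n"
    using reals_Archimedean2 by blast
  let ?k = "n + 2"
  let ?D = "trunc_frac_dim ?k (Gk_V ?k) grid_E" and ?F = "frac_dim (Gk_V ?k) grid_E"
  have "real ?k * 2 \<le> real ?k * real ?k"
    by (intro mult_left_mono) auto
  with \<open>B < n\<close> have "B < real ?k ^ 2 / 2"
    by (simp add: power2_eq_square)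
  also have "\<dots> \<le> ?D / ?F"
    using Gk_trunc_frac_dim_ge[of ?k] Gk_frac_dim_bounds[of ?k]
    by (intro frac_le) (auto intro: order_trans[OF zero_le_power2])
  finally show ?thesis
    by (intro exI[of _ ?k]) auto
qed

theorem theorem3p9:
  shows "(\<lambda>k. trunc_frac_dim k (Gk_V k) grid_E) \<in> \<Theta>(\<lambda>k. real k ^ 2)
    \<and> (\<forall>B::real. \<exists>k>1. trunc_frac_dim 1 (Gk_V k) grid_E / trunc_frac_dim k (Gk_V k) grid_E > B)
    \<and> (\<forall>B::real. \<exists>k>1. trunc_frac_dim k (Gk_V k) grid_E / frac_dim (Gk_V k) grid_E > B)"
  using Gk_trunc_frac_dim_Theta Gk_trunc_frac_dim_1_over_k_unbounded
    Gk_trunc_frac_dim_over_frac_dim_unbounded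
  by blast

end
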